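(* Let $W$ be any channel in the support of $\mathcal{W}_{Q,\varepsilon}$, let $n\ge1$, and let $r\ge 0$. If $\mathcal{R}^{(0)}_{W,n}\ge r$, then the graph $G_{W,n}$ has a bipartite independent set of size at least $$2^{rn}-2^{rn/2}\left((1+2^q)^n-2^{nq}\right).$$
   Context: Fix an integer $q\ge1$, $Q=2^q$, $[Q]=\{1,\dots,Q\}$, and a symbol $\phi\notin[Q]$. A channel is a function $W=(W_1,W_2)$ with $W_i:[Q]^2\to[Q]\cup\{\phi\}$. For block length $n$, $W^{(n)}_i(x,y)=(W_i(x_1,y_1),\dots,W_i(x_n,y_n))$ for $x,y\in[Q]^n$. A zero-error code of block length $n$ with message sets $[M_1],[M_2]$ consists of encoders $E_i:[M_i]\to[Q]^n$ and decoders $D_i:([Q]\cup\{\phi\})^n\to[M_i]$ with $D_i(W^{(n)}_i(E_1(m_1),E_2(m_2)))=m_i$ for $i=1,2$ and all $(m_1,m_2)\in[M_1]\times[M_2]$. $\mathcal{R}^{(0)}_{W,n}$ is the supremum of $R_1+R_2$ over rate pairs for which a zero-error code of block length $n$ with $M_i=2^{R_in}$ (positive integers) exists. $\mathcal{W}_{Q,\varepsilon}$ is the distribution over channels in which, independently for every $(x,y)\in[Q]^2$, $W(x,y)=(\phi,\phi)$ with probability $\varepsilon$ and $W(x,y)=(x,y)$ otherwise. $G_{W,n}$ is the bipartite graph whose two sides are two copies of $[Q]^n$, with $x^{(n)}$ (left) adjacent to $y^{(n)}$ (right) iff there is an index $i$ with $W(x_i,y_i)=(\phi,\phi)$. In a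 bipartite graph with sides $X,Y$, a bipartite independent set (BPIS) is a pair $(A,B)$ with $A\subseteq X$, $B\subseteq Y$ and no edge between $A$ and $B$; its size is $|A|\cdot|B|$. Logarithms are base 2. *)

theory Defs
  imports Complex_Main
begin

text \<open>Input alphabet [Q] = {1..Q}; the output alphabet [Q] + {phi} is modelled by
  nat option, with None playing the role of the erasure symbol phi.\<close>

type_synonym channel = "nat \<Rightarrow> nat \<Rightarrow> nat option \<times> nat option"

definition in_support :: "nat \<Rightarrow> real \<Rightarrow> channel \<Rightarrow> bool" where
  "in_support Q \<epsilon> W \<longleftrightarrow>
     (\<forall>x\<in>{1..Q}. \<forall>y\<in>{1..Q}.
        (W x y = (None, None) \<and> \<epsilon> > 0) \<or> (W x y = (Some x, Some y) \<and> \<epsilon> < 1))"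

definition words :: "nat \<Rightarrow> nat \<Rightarrow> nat list set" where
  "words Q n = {x. length x = n \<and> set x \<subseteq> {1..Q}}"

definition out_words :: "nat \<Rightarrow> nat \<Rightarrow> nat option list set" where
  "out_words Q n = {w. length w = n \<and> (\<forall>s\<in>set w. s = None \<or> (\<exists>a\<in>{1..Q}. s = Some a))}"

definition chan1 :: "channel \<Rightarrow> nat list \<Rightarrow> nat list \<Rightarrow> nat option list" where
  "chan1 W x y = map2 (\<lambda>a b. fst (W a b)) x y"

definition chan2 :: "channel \<Rightarrow> nat list \<Rightarrow> nat list \<Rightarrow> nat option list" where
  "chan2 W x y = map2 (\<lambda>a b. snd (W a b)) x y"

definition zero_error_code ::
  "nat \<Rightarrow> nat \<Rightarrow> channel \<Rightarrow> nat \<Rightarrow> nat \<Rightarrow> (nat \<Rightarrow> nat list) \<Rightarrow> (nat \<Rightarrow> nat list)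
     \<Rightarrow> (nat option list \<Rightarrow> nat) \<Rightarrow> (nat option list \<Rightarrow> nat) \<Rightarrow> bool" where
  "zero_error_code Q n W M1 M2 E1 E2 D1 D2 \<longleftrightarrow>
     (\<forall>m\<in>{1..M1}. E1 m \<in> words Q n) \<and> (\<forall>m\<in>{1..M2}. E2 m \<in> words Q n) \<and>
     (\<forall>w\<in>out_words Q n. D1 w \<in> {1..M1}) \<and> (\<forall>w\<in>out_words Q n. D2 w \<in> {1..M2}) \<and>
     (\<forall>m1\<in>{1..M1}. \<forall>m2\<in>{1..M2}.
        D1 (chan1 W (E1 m1) (E2 m2)) = m1 \<and> D2 (chan2 W (E1 m1) (E2 m2)) = m2)"

definition has_code :: "nat \<Rightarrow> nat \<Rightarrow> channel \<Rightarrow> nat \<Rightarrow> nat \<Rightarrow> bool" where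
  "has_code Q n W M1 M2 \<longleftrightarrow> (\<exists>E1 E2 D1 D2. zero_error_code Q n W M1 M2 E1 E2 D1 D2)"

definition sum_rate :: "nat \<Rightarrow> nat \<Rightarrow> channel \<Rightarrow> real" where
  "sum_rate Q n W = Sup {R1 + R2 | R1 R2. \<exists>M1 M2::nat. M1 \<ge> 1 \<and> M2 \<ge> 1 \<and>
      real M1 = 2 powr (R1 * real n) \<and> real M2 = 2 powr (R2 * real n) \<and> has_code Q n W M1 M2}"

definition G_adj :: "channel \<Rightarrow> nat \<Rightarrow> nat list \<Rightarrow> nat list \<Rightarrow> bool" where
  "G_adj W n x y \<longleftrightarrow> (\<exists>i<n. W (x ! i) (y ! i) = (None, None))"

definition bpis :: "'a set \<Rightarrow> 'b set \<Rightarrow> ('a \<Rightarrow> 'b \<Rightarrow> bool) \<Rightarrow> 'a set \<Rightarrow> 'b set \<Rightarrow> bool" where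
  "bpis X Y adj A B \<longleftrightarrow> A \<subseteq> X \<and> B \<subseteq> Y \<and> (\<forall>a\<in>A. \<forall>b\<in>B. \<not> adj a b)"

end

theory Submission imports Defs begin

text \<open>Take a zero-error code attaining the sum rate, so that M1 M2 \<ge> 2^(rn). If the codewords
  of messages m1 and m2 are adjacent in G_{W,n}, both channel outputs contain an erasure, and the
  decoders must still recover m1 and m2 from them. Hence on each side at most (Q+1)^n - Q^n
  messages have a codeword adjacent to some codeword of the other side. Discarding these messages
  on the larger side leaves a bipartite independent set of size at least
  M1 M2 - min(M1,M2) ((Q+1)^n - Q^n), and min(M1,M2) \<le> (M1 M2)^(1/2).\<close>

definition erased_words :: "nat \<Rightarrow> nat \<Rightarrow> nat option list set" where
  "erased_words Q n = {w \<in> out_words Q n. None \<in> set w}"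

lemma finite_words: "finite (words Q n)" and card_words: "card (words Q n) = Q ^ n"
  unfolding words_def using finite_lists_length_eq[of "{1..Q}" n] card_lists_length_eq[of "{1..Q}" n]
  by (simp_all add: conj_commute)

lemma
  shows finite_erased_words: "finite (erased_words Q n)"
    and card_erased_words: "card (erased_words Q n) = (Q + 1) ^ n - Q ^ n"
proof -
  let ?all = "{w. set w \<subseteq> insert None (Some ` {1..Q}) \<and> length w = n}"
  let ?unerased = "{w. set w \<subseteq> Some ` {1..Q} \<and> length w = n}"
  have eq: "erased_words Q n = ?all - ?unerased"
    unfolding erased_words_def out_words_def by auto
  have "finite ?all" by (rule finite_lists_length_eq) simp
  then show "finite (erased_words Q n)" by (simp add: eq)
  have "finite ?unerased" "?unerased \<subseteq> ?all" by (auto intro: finite_lists_length_eq)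
  then show "card (erased_words Q n) = (Q + 1) ^ n - Q ^ n"
    by (simp add: eq card_Diff_subset card_lists_length_eq card_image)
qed

lemma in_support_cases:
  assumes "in_support Q \<epsilon> W" "a \<in> {1..Q}" "b \<in> {1..Q}"
  shows "W a b = (None, None) \<or> W a b = (Some a, Some b)"
  using assms unfolding in_support_def by blast

lemma adjacent_outputs_erased:
  assumes W: "in_support Q \<epsilon> W" and x: "x \<in> words Q n" and y: "y \<in> words Q n"
    and adj: "G_adj W n x y"
  shows "chan1 W x y \<in> erased_words Q n" "chan2 W x y \<in> erased_words Q n"
proof -
  from adj obtain i where i: "i < n" "W (x ! i) (y ! i) = (None, None)"
    unfolding G_adj_def by blast
  have len: "length x = n" "length y = n" and letters: "set x \<subseteq> {1..Q}" "set y \<subseteq> {1..Q}"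
    using x y by (auto simp: words_def)
  have "map2 (\<lambda>a b. f (W a b)) x y \<in> erased_words Q n" if f: "f = fst \<or> f = snd"
    for f :: "nat option \<times> nat option \<Rightarrow> nat option"
  proof -
    have "s = None \<or> (\<exists>c\<in>{1..Q}. s = Some c)" if "s \<in> set (map2 (\<lambda>a b. f (W a b)) x y)" for s
    proof -
      from that obtain a b where ab: "(a, b) \<in> set (zip x y)" "s = f (W a b)" by auto
      then have "a \<in> {1..Q}" "b \<in> {1..Q}"
        using letters by (auto dest: set_zip_leftD set_zip_rightD)
      with ab f in_support_cases[OF W] show ?thesis by fastforce
    qed
    moreover have "map2 (\<lambda>a b. f (W a b)) x y ! i = None"
      using i len f by auto
    then have "None \<in> set (map2 (\<lambda>a b. f (W a b)) x y)"
      using i len by (metis length_map length_zip min.idem nth_mem)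
    ultimately show ?thesis
      using len by (simp add: erased_words_def out_words_def)
  qed
  then show "chan1 W x y \<in> erased_words Q n" "chan2 W x y \<in> erased_words Q n"
    by (simp_all add: chan1_def chan2_def)
qed

lemma zero_error_codeD:
  assumes "zero_error_code Q n W M1 M2 E1 E2 D1 D2" "m1 \<in> {1..M1}" "m2 \<in> {1..M2}"
  shows "E1 m1 \<in> words Q n" "E2 m2 \<in> words Q n"
    "D1 (chan1 W (E1 m1) (E2 m2)) = m1" "D2 (chan2 W (E1 m1) (E2 m2)) = m2"
  using assms unfolding zero_error_code_def by auto

lemma zero_error_code_inj_on1:
  assumes "zero_error_code Q n W M1 M2 E1 E2 D1 D2" "M2 \<ge> 1"
  shows "inj_on E1 {1..M1}"
  using assms unfolding zero_error_code_def inj_on_def by (metis atLeastAtMost_iff order_refl)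

lemma zero_error_code_inj_on2:
  assumes "zero_error_code Q n W M1 M2 E1 E2 D1 D2" "M1 \<ge> 1"
  shows "inj_on E2 {1..M2}"
  using assms unfolding zero_error_code_def inj_on_def by (metis atLeastAtMost_iff order_refl)

lemma zero_error_code_message_bounds:
  assumes "zero_error_code Q n W M1 M2 E1 E2 D1 D2" "M1 \<ge> 1" "M2 \<ge> 1"
  shows "M1 \<le> Q ^ n" "M2 \<le> Q ^ n"
proof -
  have "E1 ` {1..M1} \<subseteq> words Q n" "E2 ` {1..M2} \<subseteq> words Q n"
    using assms(1) by (auto simp: zero_error_code_def)
  then show "M1 \<le> Q ^ n" "M2 \<le> Q ^ n"
    using card_inj_on_le[OF zero_error_code_inj_on1[OF assms(1,3)] _ finite_words]
      card_inj_on_le[OF zero_error_code_inj_on2[OF assms(1,2)] _ finite_words]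
    by (simp_all add: card_words)
qed

lemma has_code_1_1:
  assumes "Q \<ge> 1"
  shows "has_code Q n W 1 1"
  unfolding has_code_def zero_error_code_def
  using assms by (intro exI[of _ "\<lambda>_. replicate n 1"] exI[of _ "\<lambda>_. 1"]) (auto simp: words_def)

text \<open>The supremum in the definition of the sum rate is a maximum: the rates of codes are
  among the finitely many values log M / n with M \<le> Q^n, and the trivial code with
  M1 = M2 = 1 makes the set nonempty.\<close>

lemma sum_rate_attained:
  assumes "Q \<ge> 1" "n \<ge> 1"
  obtains M1 M2 where "M1 \<ge> 1" "M2 \<ge> 1" "has_code Q n W M1 M2"
    "real (M1 * M2) = 2 powr (sum_rate Q n W * real n)"
proof -
  define S where "S = {R1 + R2 | R1 R2. \<exists>M1 M2::nat. M1 \<ge> 1 \<and> M2 \<ge> 1 \<and>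
      real M1 = 2 powr (R1 * real n) \<and> real M2 = 2 powr (R2 * real n) \<and> has_code Q n W M1 M2}"
  let ?rate = "\<lambda>M::nat. log 2 (real M) / real n"
  have n: "real n > 0" using assms by simp
  have "S \<subseteq> (\<lambda>(M1, M2). ?rate M1 + ?rate M2) ` ({1..Q ^ n} \<times> {1..Q ^ n})"
  proof
    fix s assume "s \<in> S"
    then obtain R1 R2 M1 M2 where s: "s = R1 + R2" "M1 \<ge> 1" "M2 \<ge> 1"
      "real M1 = 2 powr (R1 * real n)" "real M2 = 2 powr (R2 * real n)" "has_code Q n W M1 M2"
      unfolding S_def by blast
    then obtain E1 E2 D1 D2 where "zero_error_code Q n W M1 M2 E1 E2 D1 D2"
      unfolding has_code_def by blast
    then have "M1 \<le> Q ^ n" "M2 \<le> Q ^ n"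
      using zero_error_code_message_bounds s(2,3) by blast+
    moreover have "R1 = ?rate M1" "R2 = ?rate M2"
      using s(4,5) n by (simp_all add: log_powr)
    ultimately show "s \<in> (\<lambda>(M1, M2). ?rate M1 + ?rate M2) ` ({1..Q ^ n} \<times> {1..Q ^ n})"
      using s(1-3) by force
  qed
  then have "finite S" by (rule finite_subset) (simp add: finite_imageI)
  moreover have "0 + 0 \<in> S"
    unfolding S_def using has_code_1_1[OF assms(1)] by fastforce
  ultimately have "Sup S \<in> S" by (metis Max_in cSup_eq_Max empty_iff)
  then obtain R1 R2 M1 M2 where M: "Sup S = R1 + R2" "M1 \<ge> 1" "M2 \<ge> 1"
      "real M1 = 2 powr (R1 * real n)" "real M2 = 2 powr (R2 * real n)" "has_code Q n W M1 M2"
    unfolding S_def by blast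
  have "real (M1 * M2) = 2 powr ((R1 + R2) * real n)"
    using M(4,5) by (simp add: powr_add distrib_right)
  with M that show ?thesis
    unfolding sum_rate_def S_def[symmetric] by simp
qed

lemma card_adjacent_messages:
  assumes code: "zero_error_code Q n W M1 M2 E1 E2 D1 D2" and W: "in_support Q \<epsilon> W"
  shows "card {m1 \<in> {1..M1}. \<exists>m2\<in>{1..M2}. G_adj W n (E1 m1) (E2 m2)} \<le> (Q + 1) ^ n - Q ^ n"
    "card {m2 \<in> {1..M2}. \<exists>m1\<in>{1..M1}. G_adj W n (E1 m1) (E2 m2)} \<le> (Q + 1) ^ n - Q ^ n"
proof -
  have "{m1 \<in> {1..M1}. \<exists>m2\<in>{1..M2}. G_adj W n (E1 m1) (E2 m2)} \<subseteq> D1 ` erased_words Q n"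
    "{m2 \<in> {1..M2}. \<exists>m1\<in>{1..M1}. G_adj W n (E1 m1) (E2 m2)} \<subseteq> D2 ` erased_words Q n"
  proof safe
    fix m1 m2 assume m: "m1 \<in> {1..M1}" "m2 \<in> {1..M2}" and adj: "G_adj W n (E1 m1) (E2 m2)"
    note erased = adjacent_outputs_erased[OF W zero_error_codeD(1,2)[OF code m] adj]
    show "m1 \<in> D1 ` erased_words Q n"
      using erased(1) zero_error_codeD(3)[OF code m] by (rule rev_image_eqI[OF _ sym])
    show "m2 \<in> D2 ` erased_words Q n"
      using erased(2) zero_error_codeD(4)[OF code m] by (rule rev_image_eqI[OF _ sym])
  qed
  moreover have "card (D ` erased_words Q n) \<le> (Q + 1) ^ n - Q ^ n" for D :: "nat option list \<Rightarrow> nat"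
    using card_image_le[OF finite_erased_words] by (simp add: card_erased_words)
  ultimately show "card {m1 \<in> {1..M1}. \<exists>m2\<in>{1..M2}. G_adj W n (E1 m1) (E2 m2)} \<le> (Q + 1) ^ n - Q ^ n"
    "card {m2 \<in> {1..M2}. \<exists>m1\<in>{1..M1}. G_adj W n (E1 m1) (E2 m2)} \<le> (Q + 1) ^ n - Q ^ n"
    by (meson card_mono finite_erased_words finite_imageI le_trans)+
qed

lemma card_le_card_image_Diff:
  assumes "inj_on f J" "finite J" "B \<subseteq> J" "card B \<le> d"
  shows "card J \<le> card (f ` (J - B)) + d"
proof -
  have "card J - card B \<le> card (J - B)"
    using assms(2,3) by (intro diff_card_le_card_Diff) (rule finite_subset)
  also have "\<dots> = card (f ` (J - B))" using assms(1) by (simp add: card_image inj_on_diff)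
  finally show ?thesis using assms(4) by linarith
qed

lemma zero_error_code_bpis:
  assumes code: "zero_error_code Q n W M1 M2 E1 E2 D1 D2" and W: "in_support Q \<epsilon> W"
    and "M1 \<ge> 1" "M2 \<ge> 1"
  obtains A B where "bpis (words Q n) (words Q n) (G_adj W n) A B"
    "M1 * M2 \<le> card A * card B + min M1 M2 * ((Q + 1) ^ n - Q ^ n)"
proof -
  let ?d = "(Q + 1) ^ n - Q ^ n"
  let ?Bad1 = "{m1 \<in> {1..M1}. \<exists>m2\<in>{1..M2}. G_adj W n (E1 m1) (E2 m2)}"
  let ?Bad2 = "{m2 \<in> {1..M2}. \<exists>m1\<in>{1..M1}. G_adj W n (E1 m1) (E2 m2)}"
  have inj1: "inj_on E1 {1..M1}" and inj2: "inj_on E2 {1..M2}"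
    using zero_error_code_inj_on1 zero_error_code_inj_on2 code assms(3,4) by blast+
  have enc: "E1 ` {1..M1} \<subseteq> words Q n" "E2 ` {1..M2} \<subseteq> words Q n"
    using code by (auto simp: zero_error_code_def)
  show ?thesis
  proof (cases "M1 \<le> M2")
    case True
    define b where "b = card (E2 ` ({1..M2} - ?Bad2))"
    have "M2 \<le> b + ?d"
      unfolding b_def
      using card_le_card_image_Diff[OF inj2 finite_atLeastAtMost _ card_adjacent_messages(2)[OF code W]]
      by (simp add: subset_eq)
    then have "M1 * M2 \<le> M1 * (b + ?d)" by simp
    also have "\<dots> = card (E1 ` {1..M1}) * b + min M1 M2 * ?d"
      using True card_image[OF inj1] by (simp add: algebra_simps)
    finally show ?thesis
      unfolding b_def by (rule that[rotated]) (use enc in \<open>unfold bpis_def, blast\<close>)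
  next
    case False
    define a where "a = card (E1 ` ({1..M1} - ?Bad1))"
    have "M1 \<le> a + ?d"
      unfolding a_def
      using card_le_card_image_Diff[OF inj1 finite_atLeastAtMost _ card_adjacent_messages(1)[OF code W]]
      by (simp add: subset_eq)
    then have "M1 * M2 \<le> (a + ?d) * M2" by simp
    also have "\<dots> = a * card (E2 ` {1..M2}) + min M1 M2 * ?d"
      using False card_image[OF inj2] by (simp add: algebra_simps)
    finally show ?thesis
      unfolding a_def by (rule that[rotated]) (use enc in \<open>unfold bpis_def, blast\<close>)
  qed
qed

text \<open>With t = sqrt K: K - m d \<ge> t^2 - t d, and t^2 - t d \<ge> s^2 - s d because
  t^2 - t d - (s^2 - s d) = (t - s)(t + s - d), which is nonnegative unless s < d, when
  s^2 - s d < 0 \<le> X.\<close>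

lemma square_sub_mult_le:
  fixes K X m s d :: real
  assumes "K \<le> X + m * d" "0 \<le> X" "m\<^sup>2 \<le> K" "s\<^sup>2 \<le> K" "0 \<le> m" "0 \<le> s" "0 \<le> d"
  shows "s\<^sup>2 - s * d \<le> X"
proof (cases "s \<le> d")
  case True
  then have "s * s \<le> s * d" using assms(6) by (rule mult_left_mono)
  then show ?thesis using assms(2) by (simp add: power2_eq_square)
next
  case False
  define t where "t = sqrt K"
  have K: "0 \<le> K" using assms(4) by (smt (verit) zero_le_power2)
  have "m \<le> t" "s \<le> t"
    using assms real_le_rsqrt unfolding t_def by auto
  have "s\<^sup>2 - s * d \<le> t\<^sup>2 - t * d"
  proof -
    have "0 \<le> (t - s) * (t + s - d)"
      using False \<open>s \<le> t\<close> assms(6) by (intro mult_nonneg_nonneg) auto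
    then show ?thesis by (simp add: algebra_simps power2_eq_square)
  qed
  also have "\<dots> \<le> K - m * d"
    using \<open>m \<le> t\<close> assms(7) K by (simp add: t_def mult_right_mono)
  finally show ?thesis using assms(1) by simp
qed

theorem proposition1:
  fixes q n :: nat and \<epsilon> r :: real and W :: channel
  assumes "q \<ge> 1"
    and "0 \<le> \<epsilon>" and "\<epsilon> \<le> 1"
    and "in_support (2 ^ q) \<epsilon> W"
    and "n \<ge> 1"
    and "r \<ge> 0"
    and "sum_rate (2 ^ q) n W \<ge> r"
  shows "\<exists>A B. bpis (words (2 ^ q) n) (words (2 ^ q) n) (G_adj W n) A B \<and>
           real (card A * card B) \<ge>
             2 powr (r * real n) - 2 powr (r * real n / 2) * ((1 + 2 ^ q) ^ n - 2 ^ (n * q))"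
proof -
  define Q :: nat where "Q = 2 ^ q"
  define s where "s = 2 powr (r * real n / 2)"
  define d where "d = (Q + 1) ^ n - Q ^ n"
  obtain M1 M2 where M: "M1 \<ge> 1" "M2 \<ge> 1" "has_code Q n W M1 M2"
    and rate: "real (M1 * M2) = 2 powr (sum_rate Q n W * real n)"
    using sum_rate_attained[of Q n W] assms(5) by (auto simp: Q_def)
  then obtain E1 E2 D1 D2 where "zero_error_code Q n W M1 M2 E1 E2 D1 D2"
    unfolding has_code_def by blast
  then obtain A B where AB: "bpis (words Q n) (words Q n) (G_adj W n) A B"
    and size: "M1 * M2 \<le> card A * card B + min M1 M2 * d"
    using zero_error_code_bpis assms(4) M(1,2) unfolding Q_def d_def by blast
  have s2: "s\<^sup>2 = 2 powr (r * real n)"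
    by (simp add: s_def power2_eq_square flip: powr_add)
  have "s\<^sup>2 - s * real d \<le> real (card A * card B)"
  proof (rule square_sub_mult_le)
    show "real (M1 * M2) \<le> real (card A * card B) + real (min M1 M2) * real d"
      using size by (simp flip: of_nat_mult of_nat_add)
    show "s\<^sup>2 \<le> real (M1 * M2)"
      using rate assms(7) by (simp add: s2 Q_def mult_right_mono)
    show "(real (min M1 M2))\<^sup>2 \<le> real (M1 * M2)"
      by (simp add: power2_eq_square mult_mono)
  qed (simp_all add: s_def)
  moreover have "real d = (1 + 2 ^ q) ^ n - 2 ^ (n * q)"
    using power_mono[of Q "Q + 1" n]
    by (simp add: d_def Q_def of_nat_diff add.commute mult.commute flip: power_mult)
  ultimately show ?thesis using AB s2 unfolding Q_def s_def by auto
qed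

end
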